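(* Let $(X,d)$ be a compact metric space and $(X_k)_k$ a sequence of subsets of $X$, with $d_k$ the restriction of $d$ to $X_k\times X_k$. Assume there is $C>0$ such that $(X_k,d_k)$ is $C$-quasiconvex for every $k$, and $\lim_{k\to\infty}d_H(X_k,X)=0$. Then $(X,d)$ is $C$-quasiconvex.
   Context: A metric space $(Y,\delta)$ is $C$-quasiconvex if $\delta_I\le C\delta$, where $\delta_I(x,y)$ is the infimum of the lengths of continuous curves in $Y$ from $x$ to $y$ (length $=\sup\sum_i\delta(\gamma(t_i),\gamma(t_{i+1}))$ over partitions). The Hausdorff–Pompeiu distance is $d_H(A,B)=\max\{\sup_{x\in A}d(x,B),\sup_{y\in B}d(y,A)\}$ with $d(x,C)=\inf_{z\in C}d(x,z)$. *)

theory Defs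
  imports "HOL-Analysis.Analysis"
begin

definition curve_length :: "(real \<Rightarrow> 'a::metric_space) \<Rightarrow> ennreal" where
  "curve_length \<gamma> =
     (SUP (n, t) \<in> {(n, t). t 0 = 0 \<and> t n = 1 \<and> (\<forall>i<n. t i \<le> t (Suc i))}.
        ennreal (\<Sum>i<n. dist (\<gamma> (t i)) (\<gamma> (t (Suc i)))))"

text \<open>Intrinsic distance in Y: infimum of lengths of continuous curves in Y from x to y
  (\<infinity> if there is no such curve).\<close>
definition intrinsic_dist :: "'a::metric_space set \<Rightarrow> 'a \<Rightarrow> 'a \<Rightarrow> ennreal" where
  "intrinsic_dist Y x y =
     (INF \<gamma> \<in> {\<gamma>. path \<gamma> \<and> path_image \<gamma> \<subseteq> Y \<and> pathstart \<gamma> = x \<and> pathfinish \<gamma> = y}.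
        curve_length \<gamma>)"

definition quasiconvex :: "real \<Rightarrow> 'a::metric_space set \<Rightarrow> bool" where
  "quasiconvex C Y \<longleftrightarrow> (\<forall>x\<in>Y. \<forall>y\<in>Y. intrinsic_dist Y x y \<le> ennreal (C * dist x y))"

text \<open>Distance from a point to a set and Hausdorff--Pompeiu distance, valued in [0,\<infinity>]
  (inf of the empty set is \<infinity>).\<close>
definition pt_set_dist :: "'a::metric_space \<Rightarrow> 'a set \<Rightarrow> ennreal" where
  "pt_set_dist x C = (INF z \<in> C. ennreal (dist x z))"

definition hausdorff_dist :: "'a::metric_space set \<Rightarrow> 'a set \<Rightarrow> ennreal" where
  "hausdorff_dist A B = max (SUP x \<in> A. pt_set_dist x B) (SUP y \<in> B. pt_set_dist y A)"

end

theory Submission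
  imports Defs "HOL-Library.Diagonal_Subsequence"
begin

text \<open>Fix x, y in X. Since X_k approaches X, there are x', y' in X_k close to x, y, and a curve
  in X_k from x' to y' of length close to C d(x', y'). Sampling this curve at a fine partition and
  reparametrising the resulting chain proportionally to arc length gives maps [0,1] \<rightarrow> X that are
  C d(x,y)-Lipschitz up to an additive error tending to 0, with endpoints tending to x and y.
  By compactness of X a diagonal subsequence converges on a countable dense subset of [0,1]; the
  uniform control of the errors makes it converge everywhere, to a C d(x,y)-Lipschitz path
  from x to y. Its length is at most C d(x,y).\<close>

lemma partition_sum_le_curve_length:
  assumes "t 0 = 0" "t n = 1" "\<And>i. i < n \<Longrightarrow> t i \<le> t (Suc i)"
  shows "ennreal (\<Sum>i<n. dist (\<gamma> (t i)) (\<gamma> (t (Suc i)))) \<le> curve_length \<gamma>"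
  unfolding curve_length_def
  by (rule SUP_upper2[where i="(n, t)"]) (use assms in auto)

lemma curve_length_le_lipschitz:
  assumes "L-lipschitz_on {0..1} \<gamma>"
  shows "curve_length \<gamma> \<le> ennreal L"
  unfolding curve_length_def
proof (rule SUP_least, clarify)
  fix n and t :: "nat \<Rightarrow> real"
  assume t: "t 0 = 0" "t n = 1" "\<forall>i<n. t i \<le> t (Suc i)"
  have mono: "t i \<le> t j" if "i \<le> j" "j \<le> n" for i j
    using that by (induction j rule: dec_induct) (use t(3) in \<open>auto intro: order_trans\<close>)
  have "dist (\<gamma> (t i)) (\<gamma> (t (Suc i))) \<le> L * (t (Suc i) - t i)" if "i < n" for i
  proof -
    have "t i \<in> {0..1}" "t (Suc i) \<in> {0..1}"
      using mono[of 0 i] mono[of i n] mono[of 0 "Suc i"] mono[of "Suc i" n] that t(1,2) by auto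
    then show ?thesis
      using lipschitz_onD[OF assms] t(3) that by (fastforce simp: dist_real_def)
  qed
  then have "(\<Sum>i<n. dist (\<gamma> (t i)) (\<gamma> (t (Suc i)))) \<le> (\<Sum>i<n. L * (t (Suc i) - t i))"
    by (intro sum_mono) auto
  also have "\<dots> = L"
    using t by (simp add: sum_distrib_left[symmetric] sum_lessThan_telescope)
  finally show "ennreal (\<Sum>i<n. dist (\<gamma> (t i)) (\<gamma> (t (Suc i)))) \<le> ennreal L"
    by (rule ennreal_leI)
qed

section \<open>Coarse Lipschitz reparametrisation of rectifiable paths\<close>

definition coarse_lipschitz_on ::
    "real \<Rightarrow> real \<Rightarrow> 'a::metric_space set \<Rightarrow> ('a \<Rightarrow> 'b::metric_space) \<Rightarrow> bool" where
  "coarse_lipschitz_on L e S f \<longleftrightarrow> (\<forall>s\<in>S. \<forall>t\<in>S. dist (f s) (f t) \<le> L * dist s t + e)"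

lemma dist_le_partial_sum_diff:
  assumes "i \<le> j"
  shows "dist (q i) (q j) \<le> (\<Sum>k<j. dist (q k) (q (Suc k))) - (\<Sum>k<i. dist (q k) (q (Suc k)))"
  using assms
proof (induction j rule: dec_induct)
  case (step j)
  have "dist (q i) (q (Suc j)) \<le> dist (q i) (q j) + dist (q j) (q (Suc j))"
    by (rule dist_triangle)
  with step show ?case by simp
qed simp

definition arclength_index :: "(nat \<Rightarrow> real) \<Rightarrow> nat \<Rightarrow> real \<Rightarrow> nat" where
  "arclength_index S M s = Max {i. i \<le> M \<and> S i \<le> s * S M}"

lemma arclength_index_bounds:
  assumes "S 0 = 0" "0 \<le> S M" "0 \<le> s"
  shows "arclength_index S M s \<le> M" "S (arclength_index S M s) \<le> s * S M"
proof -
  have "arclength_index S M s \<in> {i. i \<le> M \<and> S i \<le> s * S M}"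
    unfolding arclength_index_def using assms by (intro Max_in) auto
  then show "arclength_index S M s \<le> M" "S (arclength_index S M s) \<le> s * S M" by auto
qed

lemma arclength_index_maximal:
  assumes "i \<le> M" "S i \<le> s * S M"
  shows "i \<le> arclength_index S M s"
  unfolding arclength_index_def using assms by (intro Max_ge) auto

lemma arclength_index_mono:
  assumes "S 0 = 0" "0 \<le> S M" "0 \<le> s" "s \<le> t"
  shows "arclength_index S M s \<le> arclength_index S M t"
proof (rule arclength_index_maximal)
  show "arclength_index S M s \<le> M" using arclength_index_bounds(1)[OF assms(1-3)] .
  have "s * S M \<le> t * S M" using assms(4,2) by (rule mult_right_mono)
  then show "S (arclength_index S M s) \<le> t * S M" using arclength_index_bounds(2)[OF assms(1-3)] by linarith
qed

lemma chain_coarse_reparametrization: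
  fixes q :: "nat \<Rightarrow> 'a::metric_space"
  assumes step: "\<And>i. i < M \<Longrightarrow> dist (q i) (q (Suc i)) < \<delta>"
    and total: "(\<Sum>i<M. dist (q i) (q (Suc i))) \<le> l" and "\<delta> > 0"
  obtains g :: "real \<Rightarrow> 'a" where "g ` {0..1} \<subseteq> q ` {..M}" "g 0 = q 0" "g 1 = q M"
    "coarse_lipschitz_on l \<delta> {0..1} g"
proof -
  define S where "S j = (\<Sum>i<j. dist (q i) (q (Suc i)))" for j
  have S0: "S 0 = 0" and SM: "0 \<le> S M" "S M \<le> l"
    using total by (auto simp: S_def intro: sum_nonneg)
  define idx where "idx = arclength_index S M"
  note idx = arclength_index_bounds[OF S0 SM(1), folded idx_def]
  note idx_maximal = arclength_index_maximal[of _ M S, folded idx_def]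
  note idx_mono = arclength_index_mono[OF S0 SM(1), folded idx_def]
  define g where "g s = q (idx s)" for s
  have "dist (q 0) (q (idx 0)) \<le> S (idx 0) - S 0"
    unfolding S_def by (rule dist_le_partial_sum_diff) simp
  then have "dist (q 0) (q (idx 0)) \<le> 0" using idx(2)[of 0] S0 by linarith
  then have "g 0 = q 0" by (simp add: g_def)
  moreover have "g 1 = q M" using idx(1)[of 1] idx_maximal[of M 1] by (simp add: g_def)
  moreover have "g ` {0..1} \<subseteq> q ` {..M}" using idx(1) by (auto simp: g_def)
  moreover have ordered: "dist (g s) (g t) \<le> l * (t - s) + \<delta>" if "0 \<le> s" "s \<le> t" for s t
  proof (cases "idx s = M")
    case True
    with idx(1)[of t] idx_mono[OF that] that have "idx t = idx s" by simp
    moreover have "0 \<le> l * (t - s)" using SM that by simp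
    ultimately show ?thesis using assms(3) by (simp add: g_def)
  next
    case False
    with idx(1)[OF that(1)] have "idx s < M" by simp
    then have "s * S M < S (Suc (idx s))" using idx_maximal[of "Suc (idx s)" s] by fastforce
    also have "\<dots> < S (idx s) + \<delta>" using step[OF \<open>idx s < M\<close>] by (simp add: S_def)
    finally have "s * S M < S (idx s) + \<delta>" .
    moreover have "S (idx t) \<le> t * S M" using idx(2) that by simp
    moreover have "(t - s) * S M \<le> (t - s) * l" using SM that by (intro mult_left_mono) auto
    moreover have "dist (g s) (g t) \<le> S (idx t) - S (idx s)"
      using dist_le_partial_sum_diff[OF idx_mono[OF that]] by (simp add: g_def S_def)
    ultimately show ?thesis by (simp add: algebra_simps)
  qed
  moreover have "coarse_lipschitz_on l \<delta> {0..1} g"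
    unfolding coarse_lipschitz_on_def dist_real_def
  proof (intro ballI)
    fix s t :: real assume "s \<in> {0..1}" "t \<in> {0..1}"
    then show "dist (g s) (g t) \<le> l * \<bar>s - t\<bar> + \<delta>"
      using ordered[of s t] ordered[of t s] by (cases "s \<le> t") (auto simp: dist_commute)
  qed
  ultimately show ?thesis using that[of g] by blast
qed

lemma rectifiable_path_coarse_reparametrization:
  fixes \<gamma> :: "real \<Rightarrow> 'a::metric_space"
  assumes "path \<gamma>" "curve_length \<gamma> \<le> ennreal l" "0 \<le> l" "\<delta> > 0"
  obtains g :: "real \<Rightarrow> 'a" where "g ` {0..1} \<subseteq> path_image \<gamma>"
    "g 0 = pathstart \<gamma>" "g 1 = pathfinish \<gamma>" "coarse_lipschitz_on l \<delta> {0..1} g"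
proof -
  have "uniformly_continuous_on {0..1} \<gamma>"
    using assms(1) unfolding path_def by (intro compact_uniformly_continuous) auto
  then obtain \<eta> where "\<eta> > 0"
    and \<eta>: "\<And>u v. u \<in> {0..1} \<Longrightarrow> v \<in> {0..1} \<Longrightarrow> dist v u < \<eta> \<Longrightarrow> dist (\<gamma> v) (\<gamma> u) < \<delta>"
    using assms(4) unfolding uniformly_continuous_on_def by metis
  obtain M :: nat where "1 / \<eta> < M" using reals_Archimedean2 by blast
  moreover have "0 < 1 / \<eta>" using \<open>\<eta> > 0\<close> by simp
  ultimately have "M > 0" by linarith
  with \<open>1 / \<eta> < M\<close> \<open>\<eta> > 0\<close> have "1 / M < \<eta>" by (simp add: field_simps)
  define q where "q i = \<gamma> (i / M)" for i :: nat
  have mesh: "i / M \<in> {0..1}" if "i \<le> M" for i :: nat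
    using that \<open>M > 0\<close> by (auto simp: field_simps)
  have step: "dist (q i) (q (Suc i)) < \<delta>" if "i < M" for i
  proof -
    have "dist (real (Suc i) / M) (i / M) = 1 / M"
      using \<open>M > 0\<close> by (simp add: dist_real_def field_simps)
    then show ?thesis
      unfolding q_def using \<eta> mesh that \<open>1 / M < \<eta>\<close> by (simp add: dist_commute)
  qed
  have total: "(\<Sum>i<M. dist (q i) (q (Suc i))) \<le> l"
  proof -
    have "ennreal (\<Sum>i<M. dist (q i) (q (Suc i))) \<le> curve_length \<gamma>"
      unfolding q_def using \<open>M > 0\<close>
      by (intro partition_sum_le_curve_length) (auto simp: divide_right_mono)
    also note assms(2)
    finally show ?thesis using assms(3) by (simp add: ennreal_le_iff)
  qed
  obtain g :: "real \<Rightarrow> 'a" where g: "g ` {0..1} \<subseteq> q ` {..M}" "g 0 = q 0" "g 1 = q M"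
    "coarse_lipschitz_on l \<delta> {0..1} g"
    by (rule chain_coarse_reparametrization[OF step total assms(4)])
  have "q ` {..M} \<subseteq> path_image \<gamma>"
    using mesh unfolding q_def path_image_def by auto
  moreover have "q 0 = pathstart \<gamma>" "q M = pathfinish \<gamma>"
    using \<open>M > 0\<close> by (simp_all add: q_def pathstart_def pathfinish_def)
  ultimately show ?thesis by (intro that[of g]) (use g in auto)
qed

section \<open>Limits of coarse Lipschitz maps\<close>

lemma LIMSEQ_dist_le:
  assumes "\<And>n. dist (f n) a \<le> e n" "e \<longlonglongrightarrow> 0"
  shows "f \<longlonglongrightarrow> a"
  using assms(2)
  by (rule metric_tendsto_imp_tendsto) (intro always_eventually allI order_trans[OF assms(1)], simp)

lemma compact_diagonal_convergent_subsequence: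
  fixes f :: "nat \<Rightarrow> 'i \<Rightarrow> 'a::first_countable_topology"
  assumes "compact X" "countable I" "\<And>n i. i \<in> I \<Longrightarrow> f n i \<in> X"
  obtains r where "strict_mono r" "\<And>i. i \<in> I \<Longrightarrow> convergent (\<lambda>n. f (r n) i)"
proof (cases "I = {}")
  case True
  then show ?thesis using that[of id] by (simp add: strict_mono_id)
next
  case False
  define P where "P k s \<longleftrightarrow> convergent (\<lambda>n. f (s n) (from_nat_into I k))" for k and s :: "nat \<Rightarrow> nat"
  interpret subseqs P
  proof
    fix k and s :: "nat \<Rightarrow> nat"
    have "\<forall>n. f (s n) (from_nat_into I k) \<in> X" using assms(3) from_nat_into[OF False] by blast
    then obtain l r where "l \<in> X" "strict_mono r" "((\<lambda>n. f (s n) (from_nat_into I k)) \<circ> r) \<longlonglongrightarrow> l"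
      by (rule seq_compactE[OF compact_imp_seq_compact[OF assms(1)]])
    then show "\<exists>r. strict_mono r \<and> P k (s \<circ> r)"
      unfolding P_def convergent_def by (auto simp: o_def)
  qed
  have "P k diagseq" for k
  proof -
    have stable: "P k (s \<circ> r)" if "strict_mono r" "P k s" for k r s
      using that LIMSEQ_subseq_LIMSEQ unfolding P_def convergent_def by (fastforce simp: o_def)
    have "P k (diagseq \<circ> (+) (Suc k))" using stable by (rule diagseq_holds)
    then obtain l where "(\<lambda>n. f (diagseq (n + Suc k)) (from_nat_into I k)) \<longlonglongrightarrow> l"
      unfolding P_def convergent_def o_def by (auto simp: add.commute)
    then have "(\<lambda>n. f (diagseq n) (from_nat_into I k)) \<longlonglongrightarrow> l" by (rule LIMSEQ_offset)
    then show ?thesis unfolding P_def convergent_def by blast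
  qed
  then show ?thesis
    using that[OF subseq_diagseq] assms(2) unfolding P_def
    by (metis from_nat_into_to_nat_on)
qed

lemma coarse_lipschitz_Cauchy_of_dense:
  fixes h :: "nat \<Rightarrow> 'b::metric_space \<Rightarrow> 'a::metric_space"
  assumes "\<And>n. coarse_lipschitz_on L (e n) S (h n)" "e \<longlonglongrightarrow> 0" "0 \<le> L"
    and "T \<subseteq> S" "S \<subseteq> closure T" "\<And>q. q \<in> T \<Longrightarrow> convergent (\<lambda>n. h n q)" "t \<in> S"
  shows "Cauchy (\<lambda>n. h n t)"
proof (rule metric_CauchyI)
  fix \<epsilon> :: real assume "\<epsilon> > 0"
  define d where "d = \<epsilon> / (5 * (L + 1))"
  have "d > 0" "L * d < \<epsilon> / 5"
    using \<open>\<epsilon> > 0\<close> assms(3) by (auto simp: d_def field_simps)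
  then obtain q where "q \<in> T" "dist q t < d"
    using assms(5,7) closure_approachable by blast
  then have "L * dist t q \<le> L * d" using assms(3) by (simp add: dist_commute mult_left_mono)
  have "\<epsilon> / 5 > 0" using \<open>\<epsilon> > 0\<close> by simp
  obtain N1 where "\<forall>n\<ge>N1. norm (e n - 0) < \<epsilon> / 5"
    using LIMSEQ_D[OF assms(2) \<open>\<epsilon> / 5 > 0\<close>] by blast
  then have N1: "\<And>n. n \<ge> N1 \<Longrightarrow> e n < \<epsilon> / 5" by (auto simp: abs_less_iff)
  obtain N2 where N2: "\<And>m n. m \<ge> N2 \<Longrightarrow> n \<ge> N2 \<Longrightarrow> dist (h m q) (h n q) < \<epsilon> / 5"
    using metric_CauchyD[OF convergent_Cauchy[OF assms(6)[OF \<open>q \<in> T\<close>]] \<open>\<epsilon> / 5 > 0\<close>]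
    by blast
  have near: "dist (h n t) (h n q) < 2 * \<epsilon> / 5" if "n \<ge> N1" for n
    using assms(1)[of n] \<open>t \<in> S\<close> \<open>q \<in> T\<close> assms(4) N1[OF that] \<open>L * dist t q \<le> L * d\<close> \<open>L * d < \<epsilon> / 5\<close>
    unfolding coarse_lipschitz_on_def by fastforce
  have "dist (h m t) (h n t) < \<epsilon>" if "m \<ge> max N1 N2" "n \<ge> max N1 N2" for m n
  proof -
    have "dist (h m t) (h n t) \<le> dist (h m t) (h m q) + dist (h m q) (h n q) + dist (h n t) (h n q)"
      by metric
    then show ?thesis using near[of m] near[of n] N2[of m n] that by simp
  qed
  then show "\<exists>M. \<forall>m\<ge>M. \<forall>n\<ge>M. dist (h m t) (h n t) < \<epsilon>" by blast
qed

lemma coarse_lipschitz_pointwise_limit: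
  fixes h :: "nat \<Rightarrow> 'b::metric_space \<Rightarrow> 'a::metric_space"
  assumes "\<And>n. coarse_lipschitz_on L (e n) S (h n)" "e \<longlonglongrightarrow> 0" "0 \<le> L"
    and "\<And>t. t \<in> S \<Longrightarrow> (\<lambda>n. h n t) \<longlonglongrightarrow> F t"
  shows "L-lipschitz_on S F"
proof (rule lipschitz_onI)
  fix s t assume "s \<in> S" "t \<in> S"
  show "dist (F s) (F t) \<le> L * dist s t"
  proof (rule LIMSEQ_le)
    show "(\<lambda>n. dist (h n s) (h n t)) \<longlonglongrightarrow> dist (F s) (F t)"
      using assms(4) \<open>s \<in> S\<close> \<open>t \<in> S\<close> by (intro tendsto_dist)
    show "(\<lambda>n. L * dist s t + e n) \<longlonglongrightarrow> L * dist s t"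
      using tendsto_add[OF tendsto_const assms(2)] by simp
    show "\<exists>N. \<forall>n\<ge>N. dist (h n s) (h n t) \<le> L * dist s t + e n"
      using assms(1) \<open>s \<in> S\<close> \<open>t \<in> S\<close> unfolding coarse_lipschitz_on_def by blast
  qed
qed (fact assms(3))

lemma coarse_lipschitz_convergent_subsequence:
  fixes h :: "nat \<Rightarrow> 'b::{metric_space, second_countable_topology} \<Rightarrow> 'a::metric_space"
  assumes "compact X" "\<And>n. h n ` S \<subseteq> X" "\<And>n. coarse_lipschitz_on L (e n) S (h n)"
    and "e \<longlonglongrightarrow> 0" "0 \<le> L"
  obtains r F where "strict_mono r" "\<And>t. t \<in> S \<Longrightarrow> (\<lambda>n. h (r n) t) \<longlonglongrightarrow> F t"
    "F ` S \<subseteq> X" "L-lipschitz_on S F"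
proof -
  obtain T where T: "countable T" "T \<subseteq> S" "S \<subseteq> closure T" by (rule separable)
  have hT: "\<And>n q. q \<in> T \<Longrightarrow> h n q \<in> X" using assms(2) T(2) by blast
  obtain r where r: "strict_mono r" "\<And>q. q \<in> T \<Longrightarrow> convergent (\<lambda>n. h (r n) q)"
    by (rule compact_diagonal_convergent_subsequence[where f = h, OF assms(1) T(1) hT]; blast)
  have er: "(\<lambda>n. e (r n)) \<longlonglongrightarrow> 0"
    using LIMSEQ_subseq_LIMSEQ[OF assms(4) r(1)] by (simp add: o_def)
  define F where "F t = lim (\<lambda>n. h (r n) t)" for t
  have F: "(\<lambda>n. h (r n) t) \<longlonglongrightarrow> F t" "F t \<in> X" if "t \<in> S" for t
  proof -
    have "\<forall>n. h (r n) t \<in> X" using assms(2) that by blast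
    moreover have "Cauchy (\<lambda>n. h (r n) t)"
      using assms(3) er assms(5) T(2,3) r(2) that
      by (rule coarse_lipschitz_Cauchy_of_dense[where h = "\<lambda>n. h (r n)" and e = "\<lambda>n. e (r n)"])
    ultimately obtain l where "l \<in> X" "(\<lambda>n. h (r n) t) \<longlonglongrightarrow> l"
      using compact_imp_complete[OF assms(1), unfolded complete_def, THEN spec[of _ "\<lambda>n. h (r n) t"]]
      by blast
    moreover from this(2) have "F t = l" unfolding F_def by (rule limI)
    ultimately show "(\<lambda>n. h (r n) t) \<longlonglongrightarrow> F t" "F t \<in> X" by simp_all
  qed
  have "L-lipschitz_on S F"
    using assms(3) er assms(5) F(1)
    by (rule coarse_lipschitz_pointwise_limit[where h = "\<lambda>n. h (r n)" and e = "\<lambda>n. e (r n)"])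
  then show ?thesis using r(1) F by (intro that[of r F]) auto
qed

lemma lipschitz_path_of_coarse_approximations:
  fixes h :: "nat \<Rightarrow> real \<Rightarrow> 'a::metric_space"
  assumes "compact X" "\<And>n. h n ` {0..1} \<subseteq> X" "\<And>n. coarse_lipschitz_on L (e n) {0..1} (h n)"
    and "e \<longlonglongrightarrow> 0" "0 \<le> L" "(\<lambda>n. h n 0) \<longlonglongrightarrow> a" "(\<lambda>n. h n 1) \<longlonglongrightarrow> b"
  obtains \<gamma> where "path \<gamma>" "path_image \<gamma> \<subseteq> X" "pathstart \<gamma> = a" "pathfinish \<gamma> = b"
    "curve_length \<gamma> \<le> ennreal L"
proof -
  obtain r \<gamma> where r: "strict_mono r" "\<And>t. t \<in> {0..1} \<Longrightarrow> (\<lambda>n. h (r n) t) \<longlonglongrightarrow> \<gamma> t"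
    and "\<gamma> ` {0..1} \<subseteq> X" "L-lipschitz_on {0..1} \<gamma>"
    by (rule coarse_lipschitz_convergent_subsequence[OF assms(1-5)]; blast)
  have sub: "(\<lambda>n. h (r n) t) \<longlonglongrightarrow> c" if "(\<lambda>n. h n t) \<longlonglongrightarrow> c" for t c
    using LIMSEQ_subseq_LIMSEQ[OF that r(1)] by (simp add: o_def)
  have "\<gamma> 0 = a" using LIMSEQ_unique[OF r(2) sub[OF assms(6)]] by simp
  moreover have "\<gamma> 1 = b" using LIMSEQ_unique[OF r(2) sub[OF assms(7)]] by simp
  moreover have "path \<gamma>"
    unfolding path_def using \<open>L-lipschitz_on {0..1} \<gamma>\<close> by (rule lipschitz_on_continuous_on)
  ultimately show ?thesis
    using \<open>\<gamma> ` {0..1} \<subseteq> X\<close> curve_length_le_lipschitz[OF \<open>L-lipschitz_on {0..1} \<gamma>\<close>]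
    by (intro that[of \<gamma>]) (simp_all add: path_image_def pathstart_def pathfinish_def)
qed

section \<open>Quasiconvexity and Hausdorff approximation\<close>

lemma hausdorff_dist_less_imp_near:
  assumes "hausdorff_dist A B < ennreal d" "w \<in> B"
  obtains z where "z \<in> A" "dist w z < d"
proof -
  have "pt_set_dist w A \<le> (SUP y\<in>B. pt_set_dist y A)" using assms(2) by (rule SUP_upper)
  also have "\<dots> \<le> hausdorff_dist A B" unfolding hausdorff_dist_def by simp
  finally have "pt_set_dist w A < ennreal d" using assms(1) by order
  then obtain z where "z \<in> A" "ennreal (dist w z) < ennreal d"
    unfolding pt_set_dist_def by (auto simp: INF_less_iff)
  then show ?thesis by (intro that[of z]) (auto simp: ennreal_less_iff)
qed

lemma quasiconvex_coarse_path:
  assumes "quasiconvex C Y" "x \<in> Y" "y \<in> Y" "0 \<le> C" "\<delta> > 0"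
  obtains g :: "real \<Rightarrow> 'a::metric_space" where "g ` {0..1} \<subseteq> Y" "g 0 = x" "g 1 = y"
    "coarse_lipschitz_on (C * dist x y + \<delta>) \<delta> {0..1} g"
proof -
  have "intrinsic_dist Y x y \<le> ennreal (C * dist x y)"
    using assms(1-3) unfolding quasiconvex_def by blast
  also have "\<dots> < ennreal (C * dist x y + \<delta>)"
    using assms(4,5) by (subst ennreal_less_iff) auto
  finally obtain \<gamma> where \<gamma>: "path \<gamma>" "path_image \<gamma> \<subseteq> Y" "pathstart \<gamma> = x" "pathfinish \<gamma> = y"
    "curve_length \<gamma> < ennreal (C * dist x y + \<delta>)"
    unfolding intrinsic_dist_def by (auto simp: INF_less_iff)
  have "0 \<le> C * dist x y + \<delta>" using assms(4,5) by simp
  then obtain g :: "real \<Rightarrow> 'a" where "g ` {0..1} \<subseteq> path_image \<gamma>"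
    "g 0 = pathstart \<gamma>" "g 1 = pathfinish \<gamma>" "coarse_lipschitz_on (C * dist x y + \<delta>) \<delta> {0..1} g"
    by (rule rectifiable_path_coarse_reparametrization[OF \<gamma>(1) less_imp_le[OF \<gamma>(5)] _ assms(5)]; blast)
  with \<gamma>(2-4) show ?thesis by (intro that[of g]) auto
qed

lemma quasiconvex_near_subset_coarse_path:
  assumes "Y \<subseteq> X" "quasiconvex C Y" "hausdorff_dist Y X < ennreal d" "x \<in> X" "y \<in> X" "0 \<le> C"
  obtains g :: "real \<Rightarrow> 'a::metric_space" where "g ` {0..1} \<subseteq> X" "dist (g 0) x \<le> d" "dist (g 1) y \<le> d"
    "coarse_lipschitz_on (C * dist x y) ((2 * C + 2) * d) {0..1} g"
proof -
  obtain x' where "x' \<in> Y" "dist x x' < d" by (rule hausdorff_dist_less_imp_near[OF assms(3,4)])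
  obtain y' where "y' \<in> Y" "dist y y' < d" by (rule hausdorff_dist_less_imp_near[OF assms(3,5)])
  then have "d > 0" by (meson zero_le_dist order_le_less_trans)
  obtain g :: "real \<Rightarrow> 'a" where g: "g ` {0..1} \<subseteq> Y" "g 0 = x'" "g 1 = y'"
    "coarse_lipschitz_on (C * dist x' y' + d) d {0..1} g"
    by (rule quasiconvex_coarse_path[OF assms(2) \<open>x' \<in> Y\<close> \<open>y' \<in> Y\<close> assms(6) \<open>d > 0\<close>]; blast)
  have "coarse_lipschitz_on (C * dist x y) ((2 * C + 2) * d) {0..1} g"
    unfolding coarse_lipschitz_on_def
  proof (intro ballI)
    fix s t :: real assume "s \<in> {0..1}" "t \<in> {0..1}"
    then have st: "0 \<le> dist s t" "dist s t \<le> 1" by (auto simp: dist_real_def)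
    have "dist x' y' \<le> dist x y + 2 * d" using \<open>dist x x' < d\<close> \<open>dist y y' < d\<close> by metric
    have "dist (g s) (g t) \<le> (C * dist x' y' + d) * dist s t + d"
      using g(4) \<open>s \<in> {0..1}\<close> \<open>t \<in> {0..1}\<close> unfolding coarse_lipschitz_on_def by blast
    also have "\<dots> \<le> (C * (dist x y + 2 * d) + d) * dist s t + d"
      using \<open>dist x' y' \<le> dist x y + 2 * d\<close> assms(6) st(1)
      by (intro add_right_mono mult_right_mono mult_left_mono) auto
    also have "\<dots> = C * dist x y * dist s t + (2 * C + 1) * d * dist s t + d"
      by (simp add: algebra_simps)
    also have "\<dots> \<le> C * dist x y * dist s t + (2 * C + 2) * d"
      using mult_left_le[OF st(2), of "(2 * C + 1) * d"] assms(6) \<open>d > 0\<close> by (simp add: algebra_simps)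
    finally show "dist (g s) (g t) \<le> C * dist x y * dist s t + (2 * C + 2) * d" .
  qed
  then show ?thesis
    using g assms(1) \<open>dist x x' < d\<close> \<open>dist y y' < d\<close> by (intro that[of g]) (auto simp: dist_commute)
qed

lemma hausdorff_limit_coarse_paths:
  fixes Xk :: "nat \<Rightarrow> 'a::metric_space set"
  assumes "\<And>k. Xk k \<subseteq> X" "\<And>k. quasiconvex C (Xk k)" "(\<lambda>k. hausdorff_dist (Xk k) X) \<longlonglongrightarrow> 0"
    and "x \<in> X" "y \<in> X" "0 \<le> C" "\<And>n. d n > 0"
  obtains h :: "nat \<Rightarrow> real \<Rightarrow> 'a" where "\<And>n. h n ` {0..1} \<subseteq> X"
    "\<And>n. dist (h n 0) x \<le> d n" "\<And>n. dist (h n 1) y \<le> d n"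
    "\<And>n. coarse_lipschitz_on (C * dist x y) ((2 * C + 2) * d n) {0..1} (h n)"
proof -
  have "\<forall>n. \<exists>g :: real \<Rightarrow> 'a. g ` {0..1} \<subseteq> X \<and> dist (g 0) x \<le> d n \<and> dist (g 1) y \<le> d n \<and>
      coarse_lipschitz_on (C * dist x y) ((2 * C + 2) * d n) {0..1} g" (is "\<forall>n. \<exists>g. ?P n g")
  proof
    fix n
    have "\<forall>\<^sub>F k in sequentially. hausdorff_dist (Xk k) X < ennreal (d n)"
      using assms(7) by (intro order_tendstoD(2)[OF assms(3)]) simp
    then obtain k where k: "hausdorff_dist (Xk k) X < ennreal (d n)"
      unfolding eventually_sequentially by blast
    obtain g :: "real \<Rightarrow> 'a" where "g ` {0..1} \<subseteq> X" "dist (g 0) x \<le> d n" "dist (g 1) y \<le> d n"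
      "coarse_lipschitz_on (C * dist x y) ((2 * C + 2) * d n) {0..1} g"
      by (rule quasiconvex_near_subset_coarse_path[OF assms(1,2) k assms(4-6)])
    then show "\<exists>g. ?P n g" by (intro exI[of _ g] conjI)
  qed
  then obtain h :: "nat \<Rightarrow> real \<Rightarrow> 'a" where "\<forall>n. ?P n (h n)"
    by (rule choice[THEN exE])
  then show ?thesis using that[of h] by simp
qed

theorem lemma4p6:
  fixes X :: "'a::metric_space set" and Xk :: "nat \<Rightarrow> 'a set" and C :: real
  assumes "compact X"
    and "\<And>k. Xk k \<subseteq> X"
    and "C > 0"
    and "\<And>k. quasiconvex C (Xk k)"
    and "(\<lambda>k. hausdorff_dist (Xk k) X) \<longlonglongrightarrow> 0"
  shows "quasiconvex C X"
  unfolding quasiconvex_def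
proof (intro ballI)
  fix x y assume "x \<in> X" "y \<in> X"
  define d :: "nat \<Rightarrow> real" where "d n = inverse (real (Suc n))" for n
  have "d \<longlonglongrightarrow> 0" unfolding d_def by (rule LIMSEQ_inverse_real_of_nat)
  obtain h :: "nat \<Rightarrow> real \<Rightarrow> 'a" where h: "\<And>n. h n ` {0..1} \<subseteq> X"
    "\<And>n. dist (h n 0) x \<le> d n" "\<And>n. dist (h n 1) y \<le> d n"
    "\<And>n. coarse_lipschitz_on (C * dist x y) ((2 * C + 2) * d n) {0..1} (h n)"
    using \<open>x \<in> X\<close> \<open>y \<in> X\<close> less_imp_le[OF assms(3)]
    by (rule hausdorff_limit_coarse_paths[where d = d, OF assms(2,4,5)]) (auto simp: d_def)
  have "0 \<le> C * dist x y" using assms(3) by simp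
  obtain \<gamma> where \<gamma>: "path \<gamma>" "path_image \<gamma> \<subseteq> X" "pathstart \<gamma> = x" "pathfinish \<gamma> = y"
    and "curve_length \<gamma> \<le> ennreal (C * dist x y)"
    using assms(1) h(1,4) tendsto_mult_right_zero[OF \<open>d \<longlonglongrightarrow> 0\<close>] \<open>0 \<le> C * dist x y\<close>
      LIMSEQ_dist_le[OF h(2) \<open>d \<longlonglongrightarrow> 0\<close>] LIMSEQ_dist_le[OF h(3) \<open>d \<longlonglongrightarrow> 0\<close>]
    by (rule lipschitz_path_of_coarse_approximations[where h = h and e = "\<lambda>n. (2 * C + 2) * d n"])
  have "intrinsic_dist X x y \<le> curve_length \<gamma>"
    unfolding intrinsic_dist_def using \<gamma> by (intro INF_lower) auto
  also note \<open>curve_length \<gamma> \<le> ennreal (C * dist x y)\<close>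
  finally show "intrinsic_dist X x y \<le> ennreal (C * dist x y)" .
qed

end
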